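(* Let $\{\Theta_n\}_{n\ge0}$ be a translational family of lattice congruences, $\Theta_n$ a congruence on the weak order on $S_n$. Then the map $c:\mathbb{K}[Z^\Theta_\infty]\to\mathbb{K}[S_\infty]$ is an injective algebra homomorphism, i.e. $c(u\bullet_Z v)=c(u)\bullet_S c(v)$ for all $u\in Z_p$, $v\in Z_q$, so $c$ embeds $(\mathbb{K}[Z^\Theta_\infty],\bullet_Z)$ as a subalgebra of $(\mathbb{K}[S_\infty],\bullet_S)$.
   Context: $S_n$ is the set of permutations of $[n]=\{1,\dots,n\}$ in one-line notation $x=x_1\cdots x_n$, with the (right) weak order: $x\le y$ iff $\{(x_i,x_j):x_i<x_j,\ i>j\}\subseteq\{(y_i,y_j):y_i<y_j,\ i>j\}$; this is a lattice. For $u\in S_p$, $v\in S_q$, $u\times v\in S_{p+q}$ is $u_1\cdots u_p(p+v_1)\cdots(p+v_q)$. The standardization $\mathrm{st}(a_1,\dots,a_k)$ of a sequence of distinct integers is the $u\in S_k$ with $u_i<u_j\iff a_i<a_j$. For $x\in S_{p+q}$ let $x_{\bar p}:=u\times v$, where $u$ is the standardization of the subsequence of $x$ consisting of entries in $[1,p]$ and $v$ the standardization of the subsequence of entries in $[p+1,p+q]$. For a congruence $\Theta_n$ on $S_n$, $\pi_\downarrow x$ denotes the minimum of the class of $x$. Translational: for all $p,q\ge0$, $u,u'\in S_p$, $v,v'\in S_q$: $u\times v\equiv u'\times v'\pmod{\Theta_{p+q}}$ iff $u\equiv u'\pmod{\Theta_p}$ and $v\equiv v'\pmod{\Theta_q}$.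 $\mathbb{K}$ is a field; $\mathbb{K}[S_\infty]=\bigoplus_{n\ge0}\mathbb{K}[S_n]$ with the Malvenuto–Reutenauer product $u\bullet_S v=\sum_{x\in S_{p+q},\,x_{\bar p}=u\times v}x$ (the sum of all shuffles of $u$ and $v$). Let $Z_n=\{x\in S_n:\pi_\downarrow x=x\}$ (identified with $S_n/\Theta_n$), $\mathbb{K}[Z^\Theta_\infty]=\bigoplus_{n\ge0}\mathbb{K}[Z_n]$, with product $u\bullet_Z v=\sum_{x\in Z_{p+q},\,x_{\bar p}=u\times v}x$ for $u\in Z_p$, $v\in Z_q$. The linear map $c$ sends $x\in Z_n$ to the sum of all elements of the $\Theta_n$-class of $x$. *)

theory Defs
  imports Main
begin

definition perms :: "nat \<Rightarrow> nat list set" where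
  "perms n = {xs. distinct xs \<and> set xs = {1..n}}"

definition inv_set :: "nat list \<Rightarrow> (nat \<times> nat) set" where
  "inv_set x = {(x ! i, x ! j) | i j. j < i \<and> i < length x \<and> x ! i < x ! j}"

definition weak_le :: "nat list \<Rightarrow> nat list \<Rightarrow> bool" where
  "weak_le x y \<longleftrightarrow> inv_set x \<subseteq> inv_set y"

definition is_join :: "nat \<Rightarrow> nat list \<Rightarrow> nat list \<Rightarrow> nat list \<Rightarrow> bool" where
  "is_join n x y z \<longleftrightarrow> z \<in> perms n \<and> weak_le x z \<and> weak_le y z \<and>
     (\<forall>w\<in>perms n. weak_le x w \<and> weak_le y w \<longrightarrow> weak_le z w)"

definition is_meet :: "nat \<Rightarrow> nat list \<Rightarrow> nat list \<Rightarrow> nat list \<Rightarrow> bool" where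
  "is_meet n x y z \<longleftrightarrow> z \<in> perms n \<and> weak_le z x \<and> weak_le z y \<and>
     (\<forall>w\<in>perms n. weak_le w x \<and> weak_le w y \<longrightarrow> weak_le w z)"

definition lattice_congruence :: "nat \<Rightarrow> (nat list \<Rightarrow> nat list \<Rightarrow> bool) \<Rightarrow> bool" where
  "lattice_congruence n R \<longleftrightarrow>
     (\<forall>x y. R x y \<longrightarrow> x \<in> perms n \<and> y \<in> perms n) \<and>
     (\<forall>x\<in>perms n. R x x) \<and>
     (\<forall>x y. R x y \<longrightarrow> R y x) \<and>
     (\<forall>x y z. R x y \<longrightarrow> R y z \<longrightarrow> R x z) \<and>
     (\<forall>x x' y y' z z'. R x x' \<longrightarrow> R y y' \<longrightarrow> is_join n x y z \<longrightarrow> is_join n x' y' z' \<longrightarrow> R z z') \<and>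
     (\<forall>x x' y y' z z'. R x x' \<longrightarrow> R y y' \<longrightarrow> is_meet n x y z \<longrightarrow> is_meet n x' y' z' \<longrightarrow> R z z')"

definition ptimes :: "nat list \<Rightarrow> nat list \<Rightarrow> nat list" where
  "ptimes u v = u @ map (\<lambda>i. length u + i) v"

definition st :: "nat list \<Rightarrow> nat list" where
  "st xs = map (\<lambda>a. card {b \<in> set xs. b \<le> a}) xs"

definition xbar :: "nat \<Rightarrow> nat list \<Rightarrow> nat list" where
  "xbar p x = ptimes (st (filter (\<lambda>a. a \<le> p) x)) (st (filter (\<lambda>a. p < a) x))"

definition translational :: "(nat \<Rightarrow> nat list \<Rightarrow> nat list \<Rightarrow> bool) \<Rightarrow> bool" where
  "translational \<Theta> \<longleftrightarrow>
     (\<forall>p q u u' v v'. u \<in> perms p \<longrightarrow> u' \<in> perms p \<longrightarrow> v \<in> perms q \<longrightarrow> v' \<in> perms q \<longrightarrow>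
        (\<Theta> (p + q) (ptimes u v) (ptimes u' v') \<longleftrightarrow> \<Theta> p u u' \<and> \<Theta> q v v'))"

text \<open>Z_n: the elements equal to the minimum of their class (pi_down x = x).\<close>
definition Zset :: "(nat \<Rightarrow> nat list \<Rightarrow> nat list \<Rightarrow> bool) \<Rightarrow> nat \<Rightarrow> nat list set" where
  "Zset \<Theta> n = {x \<in> perms n. \<forall>y. \<Theta> n x y \<longrightarrow> weak_le x y}"

text \<open>Elements of K[S_infty] (and K[Z_infty]) are K-valued functions on nat lists
  (coefficients); a basis element is an indicator.\<close>
definition basis :: "nat list \<Rightarrow> nat list \<Rightarrow> 'k::field" where
  "basis x = (\<lambda>y. if y = x then 1 else 0)"

text \<open>Bilinear extension of the Malvenuto-Reutenauer product (for arguments supported on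
  permutations): coefficient of x in f \<bullet>_S g.\<close>
definition mulS :: "(nat list \<Rightarrow> 'k::field) \<Rightarrow> (nat list \<Rightarrow> 'k) \<Rightarrow> nat list \<Rightarrow> 'k" where
  "mulS f g x = (if x \<in> perms (length x) then
      (\<Sum>p\<in>{0..length x}. \<Sum>u\<in>perms p. \<Sum>v\<in>perms (length x - p).
          (if xbar p x = ptimes u v then f u * g v else 0))
    else 0)"

text \<open>Bilinear extension of the product \<bullet>_Z on K[Z_infty].\<close>
definition mulZ :: "(nat \<Rightarrow> nat list \<Rightarrow> nat list \<Rightarrow> bool) \<Rightarrow>
    (nat list \<Rightarrow> 'k::field) \<Rightarrow> (nat list \<Rightarrow> 'k) \<Rightarrow> nat list \<Rightarrow> 'k" where
  "mulZ \<Theta> f g x = (if x \<in> Zset \<Theta> (length x) then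
      (\<Sum>p\<in>{0..length x}. \<Sum>u\<in>Zset \<Theta> p. \<Sum>v\<in>Zset \<Theta> (length x - p).
          (if xbar p x = ptimes u v then f u * g v else 0))
    else 0)"

text \<open>The linear map c: z \<in> Z_n goes to the sum of its Theta_n-class.\<close>
definition cmap :: "(nat \<Rightarrow> nat list \<Rightarrow> nat list \<Rightarrow> bool) \<Rightarrow>
    (nat list \<Rightarrow> 'k::field) \<Rightarrow> nat list \<Rightarrow> 'k" where
  "cmap \<Theta> f x = (\<Sum>z\<in>{z \<in> Zset \<Theta> (length x). \<Theta> (length x) z x}. f z)"

definition KZ :: "(nat \<Rightarrow> nat list \<Rightarrow> nat list \<Rightarrow> bool) \<Rightarrow> (nat list \<Rightarrow> 'k::field) set" where
  "KZ \<Theta> = {f. \<forall>x. f x \<noteq> 0 \<longrightarrow> (\<exists>n. x \<in> Zset \<Theta> n)}"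

end

theory Submission
  imports Defs
begin

(*
  A permutation is determined by its inversion set, and the inversion sets are exactly the
  transitive and co-transitive sets of pairs; transitive closures of unions (of complements)
  therefore give joins (meets), so the weak order is a lattice.  Each class of a lattice
  congruence is an interval with a least element pi_down x, and c(f) has at x the coefficient
  of f at pi_down x.  Expanding both products, c(u *Z v) = c(u) *S c(v) reduces to: for x in
  S_(p+q) with z = pi_down x, z_(bar p) = u \<times> v iff u \<times> v is congruent to x_(bar p).
  Since y |-> y_(bar p) is the meet with a fixed permutation, z_(bar p) is congruent to
  x_(bar p); by translationality u \<times> v is minimal in its class; and so is z_(bar p): if a
  congruence contracted an adjacent descent (a, b) inside a block of z_(bar p), moving a or b
  in z across the entries separating them would give t with z congruent to z meet t although
  (b, a) is an inversion of z but not of t.  Two congruent minimal elements coincide.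
  Injectivity holds because c(f) agrees with f on Z.
*)

section \<open>Order of entries in a list\<close>

fun precedes :: "nat list \<Rightarrow> nat \<Rightarrow> nat \<Rightarrow> bool" where
  "precedes [] a b = False"
| "precedes (x # xs) a b \<longleftrightarrow> (x = a \<and> b \<in> set xs) \<or> precedes xs a b"

lemma precedes_append:
  "precedes (xs @ ys) a b \<longleftrightarrow> precedes xs a b \<or> precedes ys a b \<or> (a \<in> set xs \<and> b \<in> set ys)"
  by (induction xs) auto

lemma precedes_setD: "precedes xs a b \<Longrightarrow> a \<in> set xs \<and> b \<in> set xs"
  by (induction xs) auto

lemma precedes_iff_nth:
  "precedes xs a b \<longleftrightarrow> (\<exists>i j. i < j \<and> j < length xs \<and> xs ! i = a \<and> xs ! j = b)"
proof
  show "precedes xs a b \<Longrightarrow> \<exists>i j. i < j \<and> j < length xs \<and> xs ! i = a \<and> xs ! j = b"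
  proof (induction xs)
    case (Cons x xs)
    then consider "x = a" "b \<in> set xs" | i j where "i < j" "j < length xs" "xs ! i = a" "xs ! j = b"
      by auto
    then show ?case
    proof cases
      case 1
      then obtain j where "j < length xs" "xs ! j = b" by (auto simp: in_set_conv_nth)
      with 1 show ?thesis by (intro exI[of _ 0] exI[of _ "Suc j"]) auto
    next
      case 2
      then show ?thesis by (intro exI[of _ "Suc i"] exI[of _ "Suc j"]) auto
    qed
  qed simp
  show "\<exists>i j. i < j \<and> j < length xs \<and> xs ! i = a \<and> xs ! j = b \<Longrightarrow> precedes xs a b"
  proof (induction xs)
    case (Cons x xs)
    then obtain i j where ij: "i < j" "j < length (x # xs)" "(x # xs) ! i = a" "(x # xs) ! j = b"
      by blast
    then obtain j' where j': "j = Suc j'" by (cases j) auto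
    show ?case
    proof (cases i)
      case 0
      then show ?thesis using ij j' by auto
    next
      case (Suc i')
      then have "precedes xs a b" using Cons.IH ij j' by auto
      then show ?thesis by simp
    qed
  qed simp
qed

lemma precedes_nth_iff:
  "distinct xs \<Longrightarrow> i < length xs \<Longrightarrow> j < length xs \<Longrightarrow> precedes xs (xs ! i) (xs ! j) \<longleftrightarrow> i < j"
  unfolding precedes_iff_nth by (auto simp: nth_eq_iff_index_eq)

lemma precedes_asym: "distinct xs \<Longrightarrow> precedes xs a b \<Longrightarrow> \<not> precedes xs b a"
  by (induction xs) (auto dest: precedes_setD)

lemma precedes_irrefl: "distinct xs \<Longrightarrow> \<not> precedes xs a a"
  using precedes_asym by blast

lemma precedes_total: "a \<in> set xs \<Longrightarrow> b \<in> set xs \<Longrightarrow> a \<noteq> b \<Longrightarrow> precedes xs a b \<or> precedes xs b a"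
  by (induction xs) auto

lemma precedes_trans: "distinct xs \<Longrightarrow> precedes xs a b \<Longrightarrow> precedes xs b c \<Longrightarrow> precedes xs a c"
  by (induction xs) (auto dest: precedes_setD)

lemma precedes_filter: "precedes (filter P xs) a b \<longleftrightarrow> P a \<and> P b \<and> precedes xs a b"
  by (induction xs) auto

lemma precedes_map: "precedes (map f xs) c d \<longleftrightarrow> (\<exists>a b. precedes xs a b \<and> c = f a \<and> d = f b)"
  by (induction xs) auto

lemma precedes_sorted_wrt: "sorted_wrt R xs \<Longrightarrow> precedes xs a b \<Longrightarrow> R a b"
  by (induction xs) auto

lemma precedes_split: "precedes xs a b \<Longrightarrow> \<exists>pre mid post. xs = pre @ a # mid @ b # post"
proof (induction xs)
  case (Cons x xs)
  show ?case
  proof (cases "x = a \<and> b \<in> set xs")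
    case True
    then obtain mid post where "xs = mid @ b # post" by (meson split_list)
    with True show ?thesis by (intro exI[of _ "[]"] exI[of _ mid] exI[of _ post]) auto
  next
    case False
    with Cons obtain pre mid post where "xs = pre @ a # mid @ b # post" by auto
    then show ?thesis by (intro exI[of _ "x # pre"] exI[of _ mid] exI[of _ post]) auto
  qed
qed simp

lemma list_eq_if_precedes_eq:
  assumes "distinct xs" "distinct ys" "set xs = set ys" "\<And>a b. precedes xs a b \<longleftrightarrow> precedes ys a b"
  shows "xs = ys"
  using assms
proof (induction xs arbitrary: ys)
  case (Cons x xs)
  then obtain y ys' where ys: "ys = y # ys'" by (cases ys) auto
  have "x = y"
  proof (rule ccontr)
    assume "x \<noteq> y"
    then have "precedes (x # xs) x y" "precedes ys y x" using Cons.prems ys by auto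
    then show False using Cons.prems precedes_asym by metis
  qed
  have "precedes xs a b \<longleftrightarrow> precedes ys' a b" for a b
    using Cons.prems(1,2) Cons.prems(4)[of a b] ys \<open>x = y\<close> precedes_setD[of xs a b]
      precedes_setD[of ys' a b]
    by auto
  moreover have "distinct xs" "distinct ys'" using Cons.prems ys by auto
  moreover have "set xs = set ys'"
    using Cons.prems ys \<open>x = y\<close> by (metis Diff_insert_absorb distinct.simps(2) list.simps(15))
  ultimately have "xs = ys'" using Cons.IH by blast
  with ys \<open>x = y\<close> show ?case by simp
qed simp

lemma sorted_wrt_enumeration:
  assumes "finite S" and irrefl: "\<And>a. a \<in> S \<Longrightarrow> \<not> R a a"
    and trans: "\<And>a b c. a \<in> S \<Longrightarrow> b \<in> S \<Longrightarrow> c \<in> S \<Longrightarrow> R a b \<Longrightarrow> R b c \<Longrightarrow> R a c"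
    and total: "\<And>a b. a \<in> S \<Longrightarrow> b \<in> S \<Longrightarrow> a \<noteq> b \<Longrightarrow> R a b \<or> R b a"
  obtains xs where "distinct xs" "set xs = S" "sorted_wrt R xs"
proof -
  define rank where "rank a = card {c \<in> S. R c a}" for a
  have rank_less: "rank a < rank b" if "a \<in> S" "b \<in> S" "R a b" for a b
  proof -
    have "{c \<in> S. R c a} \<subset> {c \<in> S. R c b}"
      using that irrefl trans by blast
    then show ?thesis unfolding rank_def using \<open>finite S\<close> by (simp add: psubset_card_mono)
  qed
  obtain ys where ys: "set ys = S" "distinct ys" using finite_distinct_list[OF \<open>finite S\<close>] by blast
  define xs where "xs = sort_key rank ys"
  have xs: "distinct xs" "set xs = S" unfolding xs_def using ys by auto
  have "R (xs ! i) (xs ! j)" if "i < j" "j < length xs" for i j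
  proof -
    have "rank (xs ! i) \<le> rank (xs ! j)"
      using sorted_nth_mono[of "map rank xs" i j] that unfolding xs_def by simp
    moreover have "xs ! i \<in> S" "xs ! j \<in> S" "xs ! i \<noteq> xs ! j"
      using that xs nth_eq_iff_index_eq by fastforce+
    ultimately show ?thesis using total rank_less by fastforce
  qed
  then have "sorted_wrt R xs" by (simp add: sorted_wrt_iff_nth_less)
  with xs that show ?thesis by blast
qed

section \<open>Inversion sets and the weak order\<close>

lemma permsD: "x \<in> perms n \<Longrightarrow> distinct x \<and> set x = {1..n} \<and> length x = n"
  unfolding perms_def using distinct_card by fastforce

lemma permsI: "distinct x \<Longrightarrow> set x = {1..n} \<Longrightarrow> x \<in> perms n"
  unfolding perms_def by simp

lemma finite_perms: "finite (perms n)"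
proof (rule finite_subset)
  show "perms n \<subseteq> {xs. set xs \<subseteq> {1..n} \<and> length xs = n}" using permsD by blast
qed (rule finite_lists_length_eq[OF finite_atLeastAtMost])

lemma inv_set_precedes: "inv_set x = {(s, l). s < l \<and> precedes x l s}"
  unfolding inv_set_def precedes_iff_nth by auto

definition ordered_pairs :: "nat \<Rightarrow> (nat \<times> nat) set" where
  "ordered_pairs n = {(a, b). 1 \<le> a \<and> a < b \<and> b \<le> n}"

lemma finite_ordered_pairs: "finite (ordered_pairs n)"
  by (rule finite_subset[of _ "{1..n} \<times> {1..n}"]) (auto simp: ordered_pairs_def)

definition cotrans :: "(nat \<times> nat) set \<Rightarrow> bool" where
  "cotrans I \<longleftrightarrow> (\<forall>a b c. (a, c) \<in> I \<longrightarrow> a < b \<longrightarrow> b < c \<longrightarrow> (a, b) \<in> I \<or> (b, c) \<in> I)"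

lemma inv_set_subset_ordered_pairs: "x \<in> perms n \<Longrightarrow> inv_set x \<subseteq> ordered_pairs n"
  unfolding inv_set_precedes ordered_pairs_def using permsD precedes_setD by fastforce

lemma trans_inv_set: "x \<in> perms n \<Longrightarrow> trans (inv_set x)"
  unfolding inv_set_precedes trans_def using permsD precedes_trans by fastforce

lemma cotrans_inv_set:
  assumes x: "x \<in> perms n"
  shows "cotrans (inv_set x)"
proof -
  have "precedes x b a \<or> precedes x c b"
    if "a < b" "b < c" "precedes x c a" for a b c
  proof -
    have "a \<in> set x" "c \<in> set x" using that precedes_setD by auto
    then have "b \<in> set x" using x that permsD by auto
    then show ?thesis
      using precedes_total[of b x a] precedes_trans[of x] x permsD that \<open>a \<in> set x\<close>
      by (metis nat_neq_iff)
  qed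
  then show ?thesis unfolding cotrans_def inv_set_precedes by auto
qed

lemma inv_set_inject:
  assumes x: "x \<in> perms n" and y: "y \<in> perms n" and eq: "inv_set x = inv_set y"
  shows "x = y"
proof (rule list_eq_if_precedes_eq)
  show "distinct x" "distinct y" "set x = set y" using x y permsD by auto
  fix a b
  show "precedes x a b \<longleftrightarrow> precedes y a b"
  proof (cases "a \<in> set x \<and> b \<in> set x \<and> a \<noteq> b")
    case True
    then have "a \<in> set y" "b \<in> set y" using \<open>set x = set y\<close> by auto
    have "precedes x l s \<longleftrightarrow> precedes y l s" if "s < l" for s l
      using eq that unfolding inv_set_precedes by (auto simp: set_eq_iff)
    then show ?thesis
      using True \<open>a \<in> set y\<close> \<open>b \<in> set y\<close> \<open>distinct x\<close> \<open>distinct y\<close>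
        precedes_total precedes_asym by (metis nat_neq_iff)
  next
    case False
    then show ?thesis using precedes_setD precedes_irrefl \<open>distinct x\<close> \<open>distinct y\<close> \<open>set x = set y\<close>
      by metis
  qed
qed

lemma inv_set_realizable:
  assumes "I \<subseteq> ordered_pairs n" "trans I" "cotrans I"
  shows "\<exists>x\<in>perms n. inv_set x = I"
proof -
  define before where "before a b \<longleftrightarrow> a \<noteq> b \<and> (if b < a then (b, a) \<in> I else (a, b) \<notin> I)" for a b
  have tr: "(a, b) \<in> I \<Longrightarrow> (b, c) \<in> I \<Longrightarrow> (a, c) \<in> I" for a b c
    using assms(2) unfolding trans_def by blast
  have co: "(a, c) \<in> I \<Longrightarrow> a < b \<Longrightarrow> b < c \<Longrightarrow> (a, b) \<in> I \<or> (b, c) \<in> I" for a b c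
    using assms(3) unfolding cotrans_def by blast
  have before_trans: "before a c" if "before a b" "before b c" for a b c
  proof -
    have "a \<noteq> b" "b \<noteq> c" "a \<noteq> c" using that unfolding before_def by (cases "b < a"; auto)+
    consider "c < b" "b < a" | "a < b" "b < c" | "b < c" "c < a" | "b < a" "a < c"
      | "c < a" "a < b" | "a < c" "c < b"
      using \<open>a \<noteq> b\<close> \<open>b \<noteq> c\<close> \<open>a \<noteq> c\<close> by (meson linorder_neqE_nat)
    then show ?thesis
    proof cases
      case 1 then show ?thesis using that tr \<open>a \<noteq> c\<close> unfolding before_def by auto
    next
      case 2 then show ?thesis using that co \<open>a \<noteq> c\<close> unfolding before_def by auto
    next
      case 3 then show ?thesis using that co[of b a c] \<open>a \<noteq> c\<close> unfolding before_def by auto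
    next
      case 4 then show ?thesis using that tr[of b a c] \<open>a \<noteq> c\<close> unfolding before_def by auto
    next
      case 5 then show ?thesis using that co[of c b a] unfolding before_def by auto
    next
      case 6 then show ?thesis using that tr[of a c b] \<open>a \<noteq> c\<close> unfolding before_def by auto
    qed
  qed
  have before_total: "before a b \<or> before b a" if "a \<noteq> b" for a b
    using that unfolding before_def by auto
  obtain x where x: "distinct x" "set x = {1..n}" "sorted_wrt before x"
    by (rule sorted_wrt_enumeration[of "{1..n}" before])
      (use before_trans before_total in \<open>auto simp: before_def[of a a for a]\<close>)
  have "precedes x a b \<longleftrightarrow> before a b" if "a \<in> set x" "b \<in> set x" for a b
  proof
    show "precedes x a b \<Longrightarrow> before a b" using x(3) by (rule precedes_sorted_wrt)
    assume "before a b"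
    then have "a \<noteq> b" "\<not> before b a" using before_trans unfolding before_def by blast+
    then show "precedes x a b"
      using that precedes_total precedes_sorted_wrt[OF x(3)] by blast
  qed
  then have "precedes x l s \<longleftrightarrow> (s, l) \<in> I" if "s < l" for s l
    using that assms(1) precedes_setD[of x l s] x(2) unfolding before_def ordered_pairs_def by auto
  then have "inv_set x = I"
    using assms(1) unfolding inv_set_precedes ordered_pairs_def by auto
  with x show ?thesis by (blast intro: permsI)
qed

lemma weak_le_refl: "weak_le x x"
  unfolding weak_le_def by simp

lemma weak_le_trans: "weak_le x y \<Longrightarrow> weak_le y z \<Longrightarrow> weak_le x z"
  unfolding weak_le_def by blast

lemma weak_le_antisym: "x \<in> perms n \<Longrightarrow> y \<in> perms n \<Longrightarrow> weak_le x y \<Longrightarrow> weak_le y x \<Longrightarrow> x = y"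
  unfolding weak_le_def using inv_set_inject by blast

lemma trans_ordered_pairs: "trans (ordered_pairs n)"
  unfolding trans_def ordered_pairs_def by auto

lemma cotrans_Un: "cotrans A \<Longrightarrow> cotrans B \<Longrightarrow> cotrans (A \<union> B)"
  unfolding cotrans_def by blast

lemma cotrans_trancl:
  assumes "A \<subseteq> {(a, b). a < b}" "cotrans A"
  shows "cotrans (A\<^sup>+)"
proof -
  have co: "(a, c) \<in> A \<Longrightarrow> a < b \<Longrightarrow> b < c \<Longrightarrow> (a, b) \<in> A \<or> (b, c) \<in> A" for a b c
    using assms(2) unfolding cotrans_def by blast
  have "\<forall>b. a < b \<longrightarrow> b < c \<longrightarrow> (a, b) \<in> A\<^sup>+ \<or> (b, c) \<in> A\<^sup>+" if "(a, c) \<in> A\<^sup>+" for a c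
    using that
  proof (induction rule: trancl_induct)
    case (base y)
    then show ?case using co by blast
  next
    case (step y z)
    show ?case
    proof (intro allI impI)
      fix b assume b: "a < b" "b < z"
      consider "b < y" | "b = y" | "y < b" by linarith
      then show "(a, b) \<in> A\<^sup>+ \<or> (b, z) \<in> A\<^sup>+"
      proof cases
        case 1
        then have "(a, b) \<in> A\<^sup>+ \<or> (b, y) \<in> A\<^sup>+" using step.IH b by blast
        then show ?thesis using step.hyps(2) by (meson trancl.trancl_into_trancl)
      next
        case 2
        then show ?thesis using step.hyps(1) by blast
      next
        case 3
        then have "(y, b) \<in> A \<or> (b, z) \<in> A" using co step.hyps(2) b(2) by blast
        then show ?thesis using step.hyps(1) by (meson r_into_trancl' trancl.trancl_into_trancl)
      qed
    qed
  qed
  then show ?thesis unfolding cotrans_def by blast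
qed

lemma trans_cotrans_complement:
  assumes "trans I" "cotrans I"
  shows "trans (ordered_pairs n - I)" "cotrans (ordered_pairs n - I)"
  using assms unfolding trans_def cotrans_def ordered_pairs_def by (auto 4 3)

lemma join_exists:
  assumes x: "x \<in> perms n" and y: "y \<in> perms n"
  shows "\<exists>z. is_join n x y z"
proof -
  define I where "I = (inv_set x \<union> inv_set y)\<^sup>+"
  have sub: "inv_set x \<union> inv_set y \<subseteq> ordered_pairs n"
    using inv_set_subset_ordered_pairs x y by blast
  have "I \<subseteq> ordered_pairs n"
    unfolding I_def using trancl_mono_subset[OF sub] trancl_id[OF trans_ordered_pairs] by blast
  moreover have "cotrans I"
    unfolding I_def using sub x y
    by (intro cotrans_trancl cotrans_Un cotrans_inv_set) (auto simp: ordered_pairs_def)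
  ultimately obtain z where z: "z \<in> perms n" "inv_set z = I"
    using inv_set_realizable[of I n] unfolding I_def by auto
  have "inv_set z \<subseteq> inv_set w"
    if "w \<in> perms n" "inv_set x \<subseteq> inv_set w" "inv_set y \<subseteq> inv_set w" for w
    using z(2) trancl_mono_subset[of _ "inv_set w"] trancl_id[OF trans_inv_set[OF that(1)]]
      that(2,3)
    unfolding I_def by (metis Un_least)
  then have "is_join n x y z" using z unfolding is_join_def weak_le_def I_def by auto
  then show ?thesis by blast
qed

lemma meet_exists:
  assumes x: "x \<in> perms n" and y: "y \<in> perms n"
  shows "\<exists>z. is_meet n x y z"
proof -
  let ?co = "\<lambda>w. ordered_pairs n - inv_set w"
  have co_props: "trans (?co w)" "cotrans (?co w)" if "w \<in> perms n" for w
    using trans_cotrans_complement[OF trans_inv_set cotrans_inv_set] that by blast+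
  define J where "J = (?co x \<union> ?co y)\<^sup>+"
  have J_sub: "J \<subseteq> ordered_pairs n"
    unfolding J_def
    using trancl_mono_subset[of _ "ordered_pairs n"] trancl_id[OF trans_ordered_pairs]
    by (metis Diff_subset Un_least)
  have "cotrans J"
    unfolding J_def using co_props x y
    by (intro cotrans_trancl cotrans_Un) (auto simp: ordered_pairs_def)
  then obtain z where z: "z \<in> perms n" "inv_set z = ordered_pairs n - J"
    using inv_set_realizable[of "ordered_pairs n - J" n] trans_cotrans_complement[of J n]
    unfolding J_def by auto
  have "inv_set w \<subseteq> inv_set z"
    if "w \<in> perms n" "inv_set w \<subseteq> inv_set x" "inv_set w \<subseteq> inv_set y" for w
  proof -
    have "J \<subseteq> ?co w"
      unfolding J_def
      using that trancl_mono_subset[of _ "?co w"] trancl_id[OF co_props(1)[OF that(1)]]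
      by (metis Diff_mono Un_least subset_refl)
    then show ?thesis using z(2) inv_set_subset_ordered_pairs[OF that(1)] by auto
  qed
  moreover have "inv_set z \<subseteq> inv_set x" "inv_set z \<subseteq> inv_set y"
    using z(2) unfolding J_def by auto
  ultimately have "is_meet n x y z" using z(1) unfolding is_meet_def weak_le_def by auto
  then show ?thesis by blast
qed

lemma is_join_of_le: "x \<in> perms n \<Longrightarrow> y \<in> perms n \<Longrightarrow> weak_le x y \<Longrightarrow> is_join n x y y"
  unfolding is_join_def using weak_le_refl by blast

lemma is_meet_of_le: "x \<in> perms n \<Longrightarrow> y \<in> perms n \<Longrightarrow> weak_le x y \<Longrightarrow> is_meet n x y x"
  unfolding is_meet_def using weak_le_refl by blast

lemma is_join_commute: "is_join n x y z \<Longrightarrow> is_join n y x z"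
  unfolding is_join_def by blast

lemma inv_set_swap:
  assumes "distinct (pre @ a # b # post)" "b < a"
  shows "inv_set (pre @ b # a # post) = inv_set (pre @ a # b # post) - {(b, a)}"
  using assms unfolding inv_set_precedes by (auto simp: precedes_append dest: precedes_setD)

lemma inv_set_move_right:
  assumes "distinct (pre @ a # mid @ b # post)" "b < a" "\<forall>c\<in>set mid. a < c"
  shows "inv_set (pre @ a # mid @ b # post) - {(b, a)} \<subseteq> inv_set (pre @ mid @ b # a # post)"
    and "(b, a) \<notin> inv_set (pre @ mid @ b # a # post)"
  using assms unfolding inv_set_precedes by (auto simp: precedes_append dest: precedes_setD)

lemma inv_set_move_left:
  assumes "distinct (pre @ a # mid @ b # post)" "b < a" "\<forall>c\<in>set mid. c < b"
  shows "inv_set (pre @ a # mid @ b # post) - {(b, a)} \<subseteq> inv_set (pre @ b # a # mid @ post)"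
    and "(b, a) \<notin> inv_set (pre @ b # a # mid @ post)"
  using assms unfolding inv_set_precedes by (auto simp: precedes_append dest: precedes_setD)

lemma adjacent_descent_not_in_inv_set:
  assumes w: "w \<in> perms n" and m: "m \<in> perms n" and sub: "inv_set m \<subseteq> inv_set w"
    and "i < j" "j < n" "w ! j < w ! i" "(w ! j, w ! i) \<notin> inv_set m"
  shows "\<exists>k. Suc k < n \<and> w ! Suc k < w ! k \<and> (w ! Suc k, w ! k) \<notin> inv_set m"
  using assms(4-)
proof (induction "j - i" arbitrary: i j rule: less_induct)
  case less
  have dw: "distinct w" "length w = n" using permsD[OF w] by auto
  show ?case
  proof (cases "j = Suc i")
    case True
    then show ?thesis using less.prems by (intro exI[of _ i]) auto
  next
    case False
    define l s c where "l = w ! i" and "s = w ! j" and "c = w ! Suc i"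
    have ij: "Suc i < j" using False less.prems by simp
    have "c \<noteq> l" "c \<noteq> s"
      unfolding l_def s_def c_def using dw ij less.prems by (simp_all add: nth_eq_iff_index_eq)
    have before: "precedes w l c" "precedes w c s"
      unfolding l_def s_def c_def using dw ij less.prems by (simp_all add: precedes_nth_iff)
    have not_inv: "(x, y) \<notin> inv_set m" if "precedes w x y" for x y
      using that sub precedes_asym[OF dw(1)] unfolding inv_set_precedes by blast
    have mtrans: "trans (inv_set m)" and mco: "cotrans (inv_set m)"
      using trans_inv_set[OF m] cotrans_inv_set[OF m] .
    have sl: "s < l" "(s, l) \<notin> inv_set m" using less.prems unfolding l_def s_def by auto
    \<comment> \<open>the entry c at position Suc i yields a closer pair, by (co)transitivity of inv_set m\<close>
    have closer: "\<exists>i' j'. i' < j' \<and> j' < n \<and> j' - i' < j - i \<and> w ! j' < w ! i'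
        \<and> (w ! j', w ! i') \<notin> inv_set m"
    proof -
      consider "l < c" | "c < s" | "s < c" "c < l"
        using \<open>c \<noteq> l\<close> \<open>c \<noteq> s\<close> sl(1) by linarith
      then have "(s < c \<and> (s, c) \<notin> inv_set m) \<or> (c < l \<and> (c, l) \<notin> inv_set m)"
      proof cases
        case 1
        then show ?thesis
          using sl not_inv[OF before(1)] mco unfolding cotrans_def by (meson less_trans)
      next
        case 2
        then show ?thesis
          using sl not_inv[OF before(2)] mco unfolding cotrans_def by (meson less_trans)
      next
        case 3
        then show ?thesis using sl mtrans unfolding trans_def by blast
      qed
      then show ?thesis
      proof
        assume "s < c \<and> (s, c) \<notin> inv_set m"
        then show ?thesis
          using ij less.prems unfolding s_def c_def by (intro exI[of _ "Suc i"] exI[of _ j]) auto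
      next
        assume "c < l \<and> (c, l) \<notin> inv_set m"
        then show ?thesis
          using ij less.prems unfolding l_def c_def by (intro exI[of _ i] exI[of _ "Suc i"]) auto
      qed
    qed
    then obtain i' j' where "i' < j'" "j' < n" "j' - i' < j - i" "w ! j' < w ! i'"
      "(w ! j', w ! i') \<notin> inv_set m"
      by blast
    then show ?thesis using less.hyps[of j' i'] by blast
  qed
qed

lemma adjacent_descent_exists:
  assumes w: "w \<in> perms n" and m: "m \<in> perms n" and lt: "inv_set m \<subset> inv_set w"
  shows "\<exists>pre a b post. w = pre @ a # b # post \<and> b < a \<and> (b, a) \<notin> inv_set m"
proof -
  obtain x where "x \<in> inv_set w" "x \<notin> inv_set m" using lt by blast
  then obtain i j where "j < i" "i < n" "w ! i < w ! j" "(w ! i, w ! j) \<notin> inv_set m"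
    using permsD[OF w] unfolding inv_set_def by blast
  then obtain k where k: "Suc k < n" "w ! Suc k < w ! k" "(w ! Suc k, w ! k) \<notin> inv_set m"
    using adjacent_descent_not_in_inv_set[OF w m] lt by blast
  have "w = take k w @ w ! k # w ! Suc k # drop (Suc (Suc k)) w"
    using k(1) permsD[OF w] by (metis Cons_nth_drop_Suc Suc_lessD append_take_drop_id)
  with k(2,3) show ?thesis by (intro exI conjI)
qed

section \<open>Splitting a permutation at p\<close>

lemma st_perm: "x \<in> perms n \<Longrightarrow> st x = x"
  unfolding st_def
proof (rule map_idI)
  fix a assume "x \<in> perms n" "a \<in> set x"
  then have "{b \<in> set x. b \<le> a} = {1..a}" using permsD by auto
  then show "card {b \<in> set x. b \<le> a} = a" by simp
qed

lemma st_shifted_perm: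
  assumes "distinct x" "set x = {p + 1..p + q}"
  shows "st x = map (\<lambda>a. a - p) x"
  unfolding st_def
proof (rule map_cong[OF refl])
  fix a assume "a \<in> set x"
  then have "{b \<in> set x. b \<le> a} = {p + 1..a}" using assms by auto
  then show "card {b \<in> set x. b \<le> a} = a - p" by simp
qed

definition low_part :: "nat \<Rightarrow> nat list \<Rightarrow> nat list" where
  "low_part p x = filter (\<lambda>a. a \<le> p) x"

definition high_part :: "nat \<Rightarrow> nat list \<Rightarrow> nat list" where
  "high_part p x = map (\<lambda>a. a - p) (filter (\<lambda>a. p < a) x)"

lemma low_part_perms: "x \<in> perms n \<Longrightarrow> p \<le> n \<Longrightarrow> low_part p x \<in> perms p"
  unfolding low_part_def by (intro permsI) (auto dest: permsD)

lemma high_part_perms: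
  assumes x: "x \<in> perms n" and "p \<le> n"
  shows "high_part p x \<in> perms (n - p)"
proof (rule permsI)
  have high: "set (filter (\<lambda>a. p < a) x) = {p + 1..p + (n - p)}" using assms permsD by auto
  then show "distinct (high_part p x)"
    unfolding high_part_def using permsD[OF x]
    by (auto simp: distinct_map inj_on_def)
  have "(\<lambda>a. a - p) ` {p + 1..p + (n - p)} = {1..n - p}"
    by (auto simp: image_iff intro!: bexI[of _ "_ + p"])
  then show "set (high_part p x) = {1..n - p}"
    unfolding high_part_def using high by simp
qed

lemma xbar_eq_ptimes:
  assumes "x \<in> perms n" "p \<le> n"
  shows "xbar p x = ptimes (low_part p x) (high_part p x)"
proof -
  have "st (filter (\<lambda>a. p < a) x) = high_part p x"
    unfolding high_part_def using assms permsD[OF assms(1)]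
    by (intro st_shifted_perm[where q = "n - p"]) auto
  then show ?thesis
    using st_perm[OF low_part_perms[OF assms]] unfolding xbar_def low_part_def by simp
qed

lemma xbar_eq_filter:
  assumes "x \<in> perms n" "p \<le> n"
  shows "xbar p x = filter (\<lambda>a. a \<le> p) x @ filter (\<lambda>a. p < a) x"
proof -
  have "length (low_part p x) = p" using permsD[OF low_part_perms[OF assms]] by simp
  moreover have "map (\<lambda>i. p + i) (high_part p x) = filter (\<lambda>a. p < a) x"
    unfolding high_part_def map_map o_def by (rule map_idI) auto
  ultimately show ?thesis unfolding xbar_eq_ptimes[OF assms] ptimes_def low_part_def by simp
qed

lemma xbar_perms: "x \<in> perms n \<Longrightarrow> p \<le> n \<Longrightarrow> xbar p x \<in> perms n"
  unfolding xbar_eq_filter by (intro permsI) (auto dest: permsD)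

definition block_pairs :: "nat \<Rightarrow> (nat \<times> nat) set" where
  "block_pairs p = {(s, l). l \<le> p \<or> p < s}"

lemma inv_set_xbar:
  assumes "x \<in> perms n" "p \<le> n"
  shows "inv_set (xbar p x) = inv_set x \<inter> block_pairs p"
  unfolding xbar_eq_filter[OF assms] inv_set_precedes block_pairs_def
  by (auto simp: precedes_append precedes_filter)

lemma ptimes_perms:
  assumes u: "u \<in> perms p" and v: "v \<in> perms q"
  shows "ptimes u v \<in> perms (p + q)"
proof -
  have "(\<lambda>i. p + i) ` {1..q} = {p + 1..p + q}"
    by (auto simp: image_iff intro!: bexI[of _ "_ - p"])
  then show ?thesis
    using permsD[OF u] permsD[OF v] unfolding ptimes_def
    by (intro permsI) (auto simp: distinct_map)
qed

lemma inv_set_ptimes: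
  "u \<in> perms p \<Longrightarrow> inv_set (ptimes u v) = inv_set u \<union> {(p + s, p + l) | s l. (s, l) \<in> inv_set v}"
  unfolding inv_set_precedes ptimes_def
  by (auto simp: precedes_append precedes_map dest: permsD precedes_setD)

lemma inv_set_ptimes_subset_block_pairs:
  "u \<in> perms p \<Longrightarrow> v \<in> perms q \<Longrightarrow> inv_set (ptimes u v) \<subseteq> block_pairs p"
  using inv_set_subset_ordered_pairs[of u p] inv_set_subset_ordered_pairs[of v q]
  unfolding inv_set_ptimes block_pairs_def ordered_pairs_def by auto

lemma ptimes_inject: "length u = length u' \<Longrightarrow> ptimes u v = ptimes u' v' \<Longrightarrow> u = u' \<and> v = v'"
  unfolding ptimes_def by (auto simp: inj_def)

lemma weak_le_ptimes:
  "u \<in> perms p \<Longrightarrow> u' \<in> perms p \<Longrightarrow> weak_le u u' \<Longrightarrow> weak_le v v' \<Longrightarrow>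
    weak_le (ptimes u v) (ptimes u' v')"
  unfolding weak_le_def by (auto simp: inv_set_ptimes)

lemma xbar_eq_self_if_inv_set_block:
  "x \<in> perms n \<Longrightarrow> p \<le> n \<Longrightarrow> inv_set x \<subseteq> block_pairs p \<Longrightarrow> xbar p x = x"
  using inv_set_inject[OF xbar_perms] inv_set_xbar by blast

lemma xbar_is_meet:
  assumes "p \<le> n"
  shows "\<exists>m\<in>perms n. \<forall>x\<in>perms n. is_meet n x m (xbar p x)"
proof -
  have "trans (ordered_pairs n \<inter> block_pairs p)" "cotrans (ordered_pairs n \<inter> block_pairs p)"
    unfolding trans_def cotrans_def ordered_pairs_def block_pairs_def by auto
  then obtain m where m: "m \<in> perms n" "inv_set m = ordered_pairs n \<inter> block_pairs p"
    using inv_set_realizable[of "ordered_pairs n \<inter> block_pairs p" n] by blast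
  have "is_meet n x m (xbar p x)" if "x \<in> perms n" for x
    using that m inv_set_xbar[OF that assms] inv_set_subset_ordered_pairs[OF that]
      xbar_perms[OF that assms]
    unfolding is_meet_def weak_le_def by auto
  with m show ?thesis by blast
qed

section \<open>Lattice congruences\<close>

definition is_class_min :: "(nat list \<Rightarrow> nat list \<Rightarrow> bool) \<Rightarrow> nat list \<Rightarrow> bool" where
  "is_class_min R x \<longleftrightarrow> (\<forall>y. R x y \<longrightarrow> weak_le x y)"

context
  fixes n :: nat and R :: "nat list \<Rightarrow> nat list \<Rightarrow> bool"
  assumes cong: "lattice_congruence n R"
begin

lemma cong_perms: "R x y \<Longrightarrow> x \<in> perms n \<and> y \<in> perms n"
  using cong unfolding lattice_congruence_def by (elim conjE) blast

lemma cong_refl: "x \<in> perms n \<Longrightarrow> R x x"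
  using cong unfolding lattice_congruence_def by (elim conjE) blast

lemma cong_sym: "R x y \<Longrightarrow> R y x"
  using cong unfolding lattice_congruence_def by (elim conjE) blast

lemma cong_trans: "R x y \<Longrightarrow> R y z \<Longrightarrow> R x z"
  using cong unfolding lattice_congruence_def by (elim conjE) blast

lemma cong_join: "R x x' \<Longrightarrow> R y y' \<Longrightarrow> is_join n x y z \<Longrightarrow> is_join n x' y' z' \<Longrightarrow> R z z'"
  using cong unfolding lattice_congruence_def by (elim conjE) blast

lemma cong_meet: "R x x' \<Longrightarrow> R y y' \<Longrightarrow> is_meet n x y z \<Longrightarrow> is_meet n x' y' z' \<Longrightarrow> R z z'"
  using cong unfolding lattice_congruence_def by (elim conjE) blast

lemma cong_convex:
  assumes "R a c" "b \<in> perms n" "weak_le a b" "weak_le b c"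
  shows "R b c"
proof -
  have "a \<in> perms n" "c \<in> perms n" using cong_perms[OF assms(1)] by auto
  then have "is_join n a b b" "is_join n c b c"
    using assms is_join_of_le[where x = a and y = b] is_join_of_le[where x = b and y = c]
      is_join_commute
    by auto
  then show ?thesis using cong_join[OF assms(1) cong_refl[OF assms(2)]] by simp
qed

lemma class_min_exists:
  assumes x: "x \<in> perms n"
  shows "\<exists>z. R z x \<and> is_class_min R z"
proof -
  obtain z where z: "R z x" "\<And>w. R w x \<Longrightarrow> card (inv_set z) \<le> card (inv_set w)"
    using ex_has_least_nat[of "\<lambda>w. R w x" x "\<lambda>w. card (inv_set w)"] cong_refl[OF x] by blast
  have zp: "z \<in> perms n" using cong_perms[OF z(1)] by simp
  have "weak_le z w" if zw: "R z w" for w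
  proof -
    obtain m where m: "is_meet n z w m"
      using meet_exists[OF zp] cong_perms[OF zw] by blast
    have "R z m"
      using cong_meet[OF cong_refl[OF zp] zw is_meet_of_le[OF zp zp weak_le_refl] m] .
    then have "R m x" using cong_trans[OF cong_sym z(1)] by simp
    then have "card (inv_set z) \<le> card (inv_set m)" using z(2) by blast
    moreover have "inv_set m \<subseteq> inv_set z" using m unfolding is_meet_def weak_le_def by simp
    moreover have "finite (inv_set z)"
      using inv_set_subset_ordered_pairs[OF zp] finite_ordered_pairs by (rule finite_subset)
    ultimately have "inv_set m = inv_set z" using card_seteq by blast
    then show ?thesis using m unfolding is_meet_def weak_le_def by simp
  qed
  then show ?thesis using z(1) unfolding is_class_min_def by blast
qed

lemma class_min_unique:
  assumes "R z x" "R z' x" "is_class_min R z" "is_class_min R z'"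
  shows "z = z'"
proof -
  have "R z z'" using assms(1,2) cong_sym cong_trans by blast
  then have "weak_le z z'" "weak_le z' z"
    using assms(3,4) cong_sym unfolding is_class_min_def by blast+
  then show ?thesis using weak_le_antisym cong_perms[OF \<open>R z z'\<close>] by blast
qed

lemma class_min_le_if_cong_below:
  assumes z: "z \<in> perms n" "is_class_min R z" and y: "R y' y" and t: "t \<in> perms n"
    and le: "weak_le y' t" and inv_z: "inv_set z \<subseteq> inv_set y \<union> inv_set t"
  shows "weak_le z t"
proof -
  \<comment> \<open>the join of y and t is congruent to the join of y' and t, which is t; so
    z, the meet of z with that join, is congruent to the meet of z and t\<close>
  have yp: "y' \<in> perms n" "y \<in> perms n" using cong_perms[OF y] by auto
  obtain j where j: "is_join n y t j" using join_exists[OF yp(2) t] by blast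
  have "R t j" using cong_join[OF y cong_refl[OF t] is_join_of_le[OF yp(1) t le] j] .
  have "weak_le z j" using j inv_z unfolding is_join_def weak_le_def by blast
  then have "is_meet n z j z" using j is_meet_of_le[OF z(1)] unfolding is_join_def by blast
  obtain m where m: "is_meet n z t m" using meet_exists[OF z(1) t] by blast
  have "R z m" using cong_meet[OF cong_refl[OF z(1)] cong_sym[OF \<open>R t j\<close>] \<open>is_meet n z j z\<close> m] .
  then have "weak_le z m" using z(2) unfolding is_class_min_def by blast
  moreover have "weak_le m t" using m unfolding is_meet_def by blast
  ultimately show ?thesis by (rule weak_le_trans)
qed

lemma not_class_min_adjacent_swap:
  assumes w: "w \<in> perms n" and not_min: "\<not> is_class_min R w"
  shows "\<exists>pre a b post. w = pre @ a # b # post \<and> b < a \<and> R (pre @ b # a # post) w"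
proof -
  obtain m where m: "R m w" "is_class_min R m" using class_min_exists[OF w] by blast
  have mp: "m \<in> perms n" using cong_perms[OF m(1)] by simp
  have "weak_le m w" using m unfolding is_class_min_def by blast
  moreover have "m \<noteq> w" using m not_min by blast
  ultimately have "inv_set m \<subset> inv_set w"
    using inv_set_inject[OF mp w] unfolding weak_le_def by blast
  then obtain pre a b post where d: "w = pre @ a # b # post" "b < a" "(b, a) \<notin> inv_set m"
    using adjacent_descent_exists[OF w mp] by blast
  have dw: "distinct (pre @ a # b # post)" using permsD[OF w] d(1) by simp
  have w'p: "pre @ b # a # post \<in> perms n" using permsD[OF w] d(1) by (intro permsI) auto
  have inv': "inv_set (pre @ b # a # post) = inv_set w - {(b, a)}"
    using inv_set_swap[OF dw d(2)] d(1) by simp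
  have "weak_le m (pre @ b # a # post)" "weak_le (pre @ b # a # post) w"
    using \<open>weak_le m w\<close> d(3) inv' unfolding weak_le_def by blast+
  then have "R (pre @ b # a # post) w" using cong_convex[OF m(1) w'p] by blast
  with d show ?thesis by blast
qed

lemma cong_xbar:
  assumes "R x y" "p \<le> n"
  shows "R (xbar p x) (xbar p y)"
proof -
  obtain m where m: "m \<in> perms n" "\<forall>x\<in>perms n. is_meet n x m (xbar p x)"
    using xbar_is_meet[OF assms(2)] by blast
  then show ?thesis
    using cong_meet[OF assms(1) cong_refl[OF m(1)]] cong_perms[OF assms(1)] by blast
qed

lemma class_min_xbar_swap_not_cong:
  assumes z: "z \<in> perms n" "is_class_min R z" and p: "p \<le> n"
    and y: "xbar p z = pre @ a # b # post" and ba: "b < a" and same_block: "a \<le> p \<longleftrightarrow> b \<le> p"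
  shows "\<not> R (pre @ b # a # post) (xbar p z)"
proof
  let ?y = "xbar p z" and ?y' = "pre @ b # a # post"
  assume R: "R ?y' ?y"
  have yp: "?y \<in> perms n" using xbar_perms[OF z(1) p] .
  have dy: "distinct (pre @ a # b # post)" using permsD[OF yp] y by simp
  have ba_y: "(b, a) \<in> inv_set ?y"
    unfolding y inv_set_precedes using ba by (simp add: precedes_append)
  then have ba_z: "(b, a) \<in> inv_set z" using inv_set_xbar[OF z(1) p] by simp
  have inv_y': "inv_set ?y' \<subseteq> inv_set z - {(b, a)}"
    using inv_set_swap[OF dy ba] inv_set_xbar[OF z(1) p] y by auto
  obtain pre' mid post' where zs: "z = pre' @ a # mid @ b # post'"
    using ba_z precedes_split unfolding inv_set_precedes by blast
  have dz: "distinct (pre' @ a # mid @ b # post')" using permsD[OF z(1)] zs by simp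
  have mid_other_block: "\<not> (c \<le> p \<longleftrightarrow> a \<le> p)" if "c \<in> set mid" for c
  proof
    assume "c \<le> p \<longleftrightarrow> a \<le> p"
    moreover have "precedes z a c" "precedes z c b"
      unfolding zs using that by (auto simp: precedes_append)
    ultimately have "precedes ?y a c" "precedes ?y c b"
      unfolding xbar_eq_filter[OF z(1) p] using same_block
      by (auto simp: precedes_append precedes_filter)
    moreover have "c \<noteq> a" "c \<noteq> b" using dz that by auto
    ultimately show False using dy unfolding y by (auto simp: precedes_append dest: precedes_setD)
  qed
  \<comment> \<open>moving a behind b, or b in front of a, across mid removes the inversion (b, a) only\<close>
  obtain t where t: "t \<in> perms n" "inv_set z - {(b, a)} \<subseteq> inv_set t" "(b, a) \<notin> inv_set t"
  proof (cases "a \<le> p")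
    case True
    then have "\<forall>c\<in>set mid. a < c" using mid_other_block by force
    moreover have "pre' @ mid @ b # a # post' \<in> perms n"
      using permsD[OF z(1)] zs by (intro permsI) auto
    ultimately show ?thesis using that inv_set_move_right[OF dz ba] zs by blast
  next
    case False
    then have "\<forall>c\<in>set mid. c < b" using mid_other_block same_block by force
    moreover have "pre' @ b # a # mid @ post' \<in> perms n"
      using permsD[OF z(1)] zs by (intro permsI) auto
    ultimately show ?thesis using that inv_set_move_left[OF dz ba] zs by blast
  qed
  have "weak_le ?y' t" using inv_y' t(2) unfolding weak_le_def by blast
  moreover have "inv_set z \<subseteq> inv_set ?y \<union> inv_set t" using ba_y t(2) by blast
  ultimately have "weak_le z t" using class_min_le_if_cong_below[OF z R t(1)] by blast
  then show False using ba_z t(3) unfolding weak_le_def by blast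
qed

end

section \<open>The products and the map c\<close>

lemma Zset_iff: "x \<in> Zset \<Theta> n \<longleftrightarrow> x \<in> perms n \<and> is_class_min (\<Theta> n) x"
  unfolding Zset_def is_class_min_def by simp

lemma finite_Zset: "finite (Zset \<Theta> n)"
  unfolding Zset_def using finite_perms by simp

lemma Zset_length: "x \<in> Zset \<Theta> n \<Longrightarrow> length x = n"
  unfolding Zset_def by (simp add: permsD)

lemma mem_Zset_iff_eq: "x \<in> Zset \<Theta> p \<Longrightarrow> x \<in> Zset \<Theta> p' \<longleftrightarrow> p' = p"
  using Zset_length by blast

lemma sum_sum_basis:
  assumes "finite A" "finite B"
  shows "(\<Sum>a\<in>A. \<Sum>b\<in>B. if P a b then basis u a * basis v b else 0) =
    (if u \<in> A \<and> v \<in> B \<and> P u v then 1 else (0::'k::field))"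
proof -
  have "(\<Sum>a\<in>A. \<Sum>b\<in>B. if P a b then basis u a * basis v b else (0::'k)) =
      (\<Sum>(a, b)\<in>A \<times> B. if P a b then basis u a * basis v b else 0)"
    by (rule sum.cartesian_product)
  also have "\<dots> = (\<Sum>ab\<in>A \<times> B. if ab = (u, v) then (if P u v then 1 else 0) else 0)"
    unfolding basis_def by (intro sum.cong refl) (auto split: if_splits)
  finally show ?thesis using assms by simp
qed

lemma mulZ_basis:
  assumes u: "u \<in> Zset \<Theta> p" and v: "v \<in> Zset \<Theta> q"
  shows "mulZ \<Theta> (basis u) (basis v) x =
    (if x \<in> Zset \<Theta> (length x) \<and> length x = p + q \<and> xbar p x = ptimes u v
     then 1 else (0::'k::field))"
proof -
  define n where "n = length x"
  have inner: "(\<Sum>u'\<in>Zset \<Theta> p'. \<Sum>v'\<in>Zset \<Theta> (n - p').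
          if xbar p' x = ptimes u' v' then basis u u' * basis v v' else 0)
      = (if p' = p then (if n = p + q \<and> xbar p x = ptimes u v then 1 else 0) else 0)"
    if "p' \<le> n" for p'
    unfolding sum_sum_basis[OF finite_Zset finite_Zset] mem_Zset_iff_eq[OF u] mem_Zset_iff_eq[OF v]
    using that by auto
  have "(\<Sum>p'\<in>{0..n}. \<Sum>u'\<in>Zset \<Theta> p'. \<Sum>v'\<in>Zset \<Theta> (n - p').
          if xbar p' x = ptimes u' v' then basis u u' * basis v v' else 0)
      = (\<Sum>p'\<in>{0..n}. if p' = p then (if n = p + q \<and> xbar p x = ptimes u v then 1 else 0) else 0)"
    by (rule sum.cong) (simp_all add: inner)
  then have "mulZ \<Theta> (basis u) (basis v) x = (if x \<in> Zset \<Theta> n then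
      \<Sum>p'\<in>{0..n}. if p' = p then (if n = p + q \<and> xbar p x = ptimes u v then 1 else 0) else 0
      else 0)"
    unfolding mulZ_def n_def[symmetric] by (rule arg_cong)
  also have "\<dots> = (if x \<in> Zset \<Theta> n \<and> n = p + q \<and> xbar p x = ptimes u v then 1 else 0)"
    by simp
  finally show ?thesis unfolding n_def .
qed

lemma mulS_eq_sum_parts:
  assumes x: "x \<in> perms (length x)"
  shows "mulS f g x = (\<Sum>p\<in>{0..length x}. f (low_part p x) * g (high_part p x))"
proof -
  define n where "n = length x"
  have "(\<Sum>u\<in>perms p. \<Sum>v\<in>perms (n - p). if xbar p x = ptimes u v then f u * g v else 0)
      = f (low_part p x) * g (high_part p x)" if p: "p \<le> n" for p
  proof -
    have low: "low_part p x \<in> perms p" and high: "high_part p x \<in> perms (n - p)"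
      using low_part_perms[OF _ p] high_part_perms[OF _ p] x unfolding n_def by auto
    have "xbar p x = ptimes u v \<longleftrightarrow> u = low_part p x \<and> v = high_part p x" if "u \<in> perms p" for u v
      using xbar_eq_ptimes[OF _ p] x ptimes_inject permsD[OF that] permsD[OF low] unfolding n_def
      by metis
    then have "(\<Sum>u\<in>perms p. \<Sum>v\<in>perms (n - p). if xbar p x = ptimes u v then f u * g v else 0)
        = (\<Sum>u\<in>perms p. if u = low_part p x then
             (\<Sum>v\<in>perms (n - p). if v = high_part p x then f u * g v else 0) else 0)"
      by (intro sum.cong) auto
    then show ?thesis using low high finite_perms by simp
  qed
  then show ?thesis unfolding mulS_def n_def[symmetric] using x n_def by simp
qed

lemma cmap_eq_class_min:
  assumes cong: "lattice_congruence (length x) (\<Theta> (length x))"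
    and z: "z \<in> Zset \<Theta> (length x)" "\<Theta> (length x) z x"
  shows "cmap \<Theta> f x = f z"
proof -
  have "{z' \<in> Zset \<Theta> (length x). \<Theta> (length x) z' x} = {z}"
    using z class_min_unique[OF cong] unfolding Zset_iff by blast
  then show ?thesis unfolding cmap_def by simp
qed

lemma cmap_eq_zero:
  assumes "lattice_congruence (length x) (\<Theta> (length x))" "x \<notin> perms (length x)"
  shows "cmap \<Theta> f x = 0"
proof -
  have "{z \<in> Zset \<Theta> (length x). \<Theta> (length x) z x} = {}"
    using assms cong_perms by blast
  then show ?thesis unfolding cmap_def by (simp only: sum.empty)
qed

lemma cmap_basis:
  "cmap \<Theta> (basis u) w = (if u \<in> Zset \<Theta> (length w) \<and> \<Theta> (length w) u w then 1 else 0)"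
  unfolding cmap_def basis_def by (simp add: finite_Zset)

section \<open>Translational families\<close>

context
  fixes \<Theta> :: "nat \<Rightarrow> nat list \<Rightarrow> nat list \<Rightarrow> bool"
  assumes cong: "\<And>n. lattice_congruence n (\<Theta> n)"
    and translational: "translational \<Theta>"
begin

lemma cong_ptimes_iff:
  "u \<in> perms p \<Longrightarrow> u' \<in> perms p \<Longrightarrow> v \<in> perms q \<Longrightarrow> v' \<in> perms q \<Longrightarrow>
    \<Theta> (p + q) (ptimes u v) (ptimes u' v') \<longleftrightarrow> \<Theta> p u u' \<and> \<Theta> q v v'"
  using translational unfolding translational_def by blast

lemma class_min_ptimes:
  assumes u: "u \<in> perms p" "is_class_min (\<Theta> p) u" and v: "v \<in> perms q" "is_class_min (\<Theta> q) v"
  shows "is_class_min (\<Theta> (p + q)) (ptimes u v)"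
  unfolding is_class_min_def
proof (intro allI impI)
  let ?n = "p + q" and ?uv = "ptimes u v"
  fix y assume y: "\<Theta> ?n ?uv y"
  have uvp: "?uv \<in> perms ?n" using ptimes_perms[OF u(1) v(1)] .
  obtain m where m: "is_meet ?n y ?uv m"
    using meet_exists[OF _ uvp] cong_perms[OF cong y] by blast
  have "\<Theta> ?n m ?uv"
    using cong_meet[OF cong cong_sym[OF cong y] cong_refl[OF cong uvp] m
        is_meet_of_le[OF uvp uvp weak_le_refl]] .
  have mp: "m \<in> perms ?n" "weak_le m ?uv" "weak_le m y" using m unfolding is_meet_def by auto
  have "inv_set m \<subseteq> block_pairs p"
    using mp(2) inv_set_ptimes_subset_block_pairs[OF u(1) v(1)] unfolding weak_le_def by blast
  then have m_eq: "m = ptimes (low_part p m) (high_part p m)"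
    using xbar_eq_self_if_inv_set_block[OF mp(1)] xbar_eq_ptimes[OF mp(1)] by simp
  have lp: "low_part p m \<in> perms p" and hp: "high_part p m \<in> perms q"
    using low_part_perms[OF mp(1), of p] high_part_perms[OF mp(1), of p] by auto
  have "\<Theta> p (low_part p m) u" "\<Theta> q (high_part p m) v"
    using \<open>\<Theta> ?n m ?uv\<close> m_eq cong_ptimes_iff[OF lp u(1) hp v(1)] by auto
  then have "weak_le u (low_part p m)" "weak_le v (high_part p m)"
    using u(2) v(2) cong_sym[OF cong] unfolding is_class_min_def by blast+
  then have "weak_le ?uv m" using weak_le_ptimes[OF u(1) lp] m_eq by metis
  then show "weak_le ?uv y" using mp(3) weak_le_trans by blast
qed

lemma class_min_xbar:
  assumes z: "z \<in> perms n" "is_class_min (\<Theta> n) z" and p: "p \<le> n"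
  shows "is_class_min (\<Theta> n) (xbar p z)"
proof -
  define q where "q = n - p"
  have n: "n = p + q" using p unfolding q_def by simp
  define l h where "l = low_part p z" and "h = high_part p z"
  have lp: "l \<in> perms p" and hp: "h \<in> perms q"
    unfolding l_def h_def q_def using low_part_perms[OF z(1) p] high_part_perms[OF z(1) p] by auto
  have xbar_z: "xbar p z = l @ map ((+) p) h"
    unfolding l_def h_def xbar_eq_ptimes[OF z(1) p] ptimes_def using permsD[OF lp] l_def by simp
  have no_swap: "\<not> \<Theta> n (pre @ b # a # post) (xbar p z)"
    if "xbar p z = pre @ a # b # post" "b < a" "a \<le> p \<longleftrightarrow> b \<le> p" for pre a b post
    using class_min_xbar_swap_not_cong[OF cong z p that] .
  have "is_class_min (\<Theta> p) l"
  proof (rule ccontr)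
    assume "\<not> is_class_min (\<Theta> p) l"
    then obtain pre a b post where d: "l = pre @ a # b # post" "b < a" "\<Theta> p (pre @ b # a # post) l"
      using not_class_min_adjacent_swap[OF cong lp] by blast
    have l'p: "pre @ b # a # post \<in> perms p" using cong_perms[OF cong d(3)] by simp
    have "\<Theta> n (ptimes (pre @ b # a # post) h) (ptimes l h)"
      using cong_ptimes_iff[OF l'p lp hp hp] d(3) cong_refl[OF cong hp] n by simp
    moreover have "ptimes (pre @ b # a # post) h = pre @ b # a # post @ map ((+) p) h"
      using permsD[OF l'p] by (simp add: ptimes_def)
    moreover have "a \<le> p" "b \<le> p" using permsD[OF lp] d(1) by auto
    ultimately show False
      using no_swap[of pre a b "post @ map ((+) p) h"] xbar_z xbar_eq_ptimes[OF z(1) p] d(1,2)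
      unfolding l_def h_def by auto
  qed
  moreover have "is_class_min (\<Theta> q) h"
  proof (rule ccontr)
    assume "\<not> is_class_min (\<Theta> q) h"
    then obtain pre a b post where d: "h = pre @ a # b # post" "b < a" "\<Theta> q (pre @ b # a # post) h"
      using not_class_min_adjacent_swap[OF cong hp] by blast
    have h'p: "pre @ b # a # post \<in> perms q" using cong_perms[OF cong d(3)] by simp
    have "\<Theta> n (ptimes l (pre @ b # a # post)) (ptimes l h)"
      using cong_ptimes_iff[OF lp lp h'p hp] d(3) cong_refl[OF cong lp] n by simp
    moreover have "ptimes l (pre @ b # a # post) =
        (l @ map ((+) p) pre) @ (p + b) # (p + a) # map ((+) p) post"
      using permsD[OF lp] by (simp add: ptimes_def)
    moreover have "0 < b" using permsD[OF hp] d(1) by auto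
    ultimately show False
      using no_swap[of "l @ map ((+) p) pre" "p + a" "p + b" "map ((+) p) post"] xbar_z
        xbar_eq_ptimes[OF z(1) p] d(1,2)
      unfolding l_def h_def by auto
  qed
  ultimately show ?thesis using class_min_ptimes[OF lp _ hp] xbar_eq_ptimes[OF z(1) p] n
    unfolding l_def h_def by simp
qed

lemma xbar_class_min_eq_ptimes_iff:
  assumes z: "\<Theta> n z x" "is_class_min (\<Theta> n) z"
    and u: "u \<in> perms p" "is_class_min (\<Theta> p) u" and v: "v \<in> perms q" "is_class_min (\<Theta> q) v"
    and n: "n = p + q"
  shows "xbar p z = ptimes u v \<longleftrightarrow> \<Theta> n (ptimes u v) (xbar p x)"
proof
  have p: "p \<le> n" using n by simp
  have cong_xbar_z: "\<Theta> n (xbar p z) (xbar p x)" using cong_xbar[OF cong z(1) p] .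
  then show "xbar p z = ptimes u v \<Longrightarrow> \<Theta> n (ptimes u v) (xbar p x)" by simp
  assume "\<Theta> n (ptimes u v) (xbar p x)"
  then have R: "\<Theta> n (xbar p z) (ptimes u v)"
    using cong_xbar_z cong_sym[OF cong] cong_trans[OF cong] by blast
  have "is_class_min (\<Theta> n) (xbar p z)"
    using class_min_xbar[OF _ z(2) p] cong_perms[OF cong z(1)] by blast
  moreover have "is_class_min (\<Theta> n) (ptimes u v)" using class_min_ptimes[OF u v] n by simp
  ultimately show "xbar p z = ptimes u v"
    using class_min_unique[OF cong R cong_refl[OF cong]] cong_perms[OF cong R] by blast
qed

lemma mulS_cmap_basis:
  assumes u: "u \<in> Zset \<Theta> p" and v: "v \<in> Zset \<Theta> q" and x: "x \<in> perms n"
  shows "mulS (cmap \<Theta> (basis u)) (cmap \<Theta> (basis v)) x =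
    (if n = p + q \<and> \<Theta> n (ptimes u v) (xbar p x) then 1 else (0::'k::field))"
proof -
  have n: "length x = n" using permsD[OF x] by simp
  have up: "u \<in> perms p" and vp: "v \<in> perms q" using u v unfolding Zset_iff by auto
  have cu: "cmap \<Theta> (basis u) w = (if length w = p \<and> \<Theta> p u w then 1 else 0)" for w
    unfolding cmap_basis mem_Zset_iff_eq[OF u] by auto
  have cv: "cmap \<Theta> (basis v) w = (if length w = q \<and> \<Theta> q v w then 1 else 0)" for w
    unfolding cmap_basis mem_Zset_iff_eq[OF v] by auto
  have len: "length (low_part p' x) = p'" "length (high_part p' x) = n - p'" if "p' \<le> n" for p'
    using permsD[OF low_part_perms[OF x that]] permsD[OF high_part_perms[OF x that]] by auto
  have "mulS (cmap \<Theta> (basis u)) (cmap \<Theta> (basis v)) x =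
      (\<Sum>p'\<in>{0..n}. cmap \<Theta> (basis u) (low_part p' x) * cmap \<Theta> (basis v) (high_part p' x))"
    by (rule mulS_eq_sum_parts[of x, unfolded n, OF x])
  also have "\<dots> = (\<Sum>p'\<in>{0..n}. if p' = p then
      (if n - p = q \<and> \<Theta> p u (low_part p x) \<and> \<Theta> q v (high_part p x) then 1 else 0) else 0)"
    by (intro sum.cong refl) (auto simp: cu cv len)
  also have "\<dots> = (if n = p + q \<and> \<Theta> n (ptimes u v) (xbar p x) then 1 else 0)"
  proof (cases "n = p + q")
    case True
    then have p: "p \<le> n" by simp
    have "high_part p x \<in> perms q" using high_part_perms[OF x p] True by simp
    then have "\<Theta> n (ptimes u v) (xbar p x) \<longleftrightarrow> \<Theta> p u (low_part p x) \<and> \<Theta> q v (high_part p x)"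
      using cong_ptimes_iff[OF up low_part_perms[OF x p] vp] xbar_eq_ptimes[OF x p] True
      by simp
    with True show ?thesis by simp
  qed auto
  finally show ?thesis .
qed

lemma cmap_mulZ_basis:
  assumes u: "u \<in> Zset \<Theta> p" and v: "v \<in> Zset \<Theta> q"
  shows "cmap \<Theta> (mulZ \<Theta> (basis u) (basis v)) = mulS (cmap \<Theta> (basis u)) (cmap \<Theta> (basis v))"
proof
  fix x :: "nat list"
  define n where "n = length x"
  show "cmap \<Theta> (mulZ \<Theta> (basis u) (basis v)) x = mulS (cmap \<Theta> (basis u)) (cmap \<Theta> (basis v)) x"
  proof (cases "x \<in> perms n")
    case False
    then show ?thesis
      using cmap_eq_zero[where \<Theta> = \<Theta>, OF cong False[unfolded n_def]]
      unfolding mulS_def n_def by simp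
  next
    case True
    obtain z where z: "\<Theta> n z x" "is_class_min (\<Theta> n) z" using class_min_exists[OF cong True] by blast
    have zZ: "z \<in> Zset \<Theta> n" using z cong_perms[OF cong] unfolding Zset_iff by blast
    have "cmap \<Theta> (mulZ \<Theta> (basis u) (basis v)) x = mulZ \<Theta> (basis u) (basis v) z"
      using cmap_eq_class_min cong zZ z(1) unfolding n_def by blast
    also have "\<dots> = (if n = p + q \<and> xbar p z = ptimes u v then 1 else 0)"
      using zZ Zset_length[OF zZ] by (simp add: mulZ_basis[OF u v])
    also have "\<dots> = (if n = p + q \<and> \<Theta> n (ptimes u v) (xbar p x) then 1 else 0)"
      using xbar_class_min_eq_ptimes_iff[OF z] u v unfolding Zset_iff by auto
    also have "\<dots> = mulS (cmap \<Theta> (basis u)) (cmap \<Theta> (basis v)) x"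
      by (simp add: mulS_cmap_basis[OF u v True])
    finally show ?thesis .
  qed
qed

end

lemma inj_on_cmap:
  assumes cong: "\<And>n. lattice_congruence n (\<Theta> n)"
  shows "inj_on (cmap \<Theta> :: (nat list \<Rightarrow> 'k::field) \<Rightarrow> _) (KZ \<Theta>)"
proof (rule inj_onI)
  fix f g :: "nat list \<Rightarrow> 'k" assume f: "f \<in> KZ \<Theta>" and g: "g \<in> KZ \<Theta>" and eq: "cmap \<Theta> f = cmap \<Theta> g"
  have "cmap \<Theta> h z = h z" if "z \<in> Zset \<Theta> (length z)" for h :: "nat list \<Rightarrow> 'k" and z
    using cmap_eq_class_min[OF cong that] cong_refl[OF cong] that unfolding Zset_iff by blast
  moreover have "h z = 0" if "h \<in> KZ \<Theta>" "z \<notin> Zset \<Theta> (length z)" for h :: "nat list \<Rightarrow> 'k" and z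
    using that Zset_length unfolding KZ_def by blast
  ultimately show "f = g" using f g eq by (metis ext)
qed

theorem theorem1p2:
  fixes \<Theta> :: "nat \<Rightarrow> nat list \<Rightarrow> nat list \<Rightarrow> bool"
  assumes cong: "\<And>n. lattice_congruence n (\<Theta> n)"
    and trans: "translational \<Theta>"
  shows "(\<forall>p q u v. u \<in> Zset \<Theta> p \<longrightarrow> v \<in> Zset \<Theta> q \<longrightarrow>
            cmap \<Theta> (mulZ \<Theta> (basis u) (basis v) :: nat list \<Rightarrow> 'k::field)
              = mulS (cmap \<Theta> (basis u)) (cmap \<Theta> (basis v)))
         \<and> inj_on (cmap \<Theta> :: (nat list \<Rightarrow> 'k) \<Rightarrow> _) (KZ \<Theta>)"
  using cmap_mulZ_basis[OF cong trans] inj_on_cmap[OF cong] by blast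

end
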